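(* Let $2\leq k<n$ and let $A$ and $B$ be self-adjoint linear operators on an $n$-dimensional complex inner product space (equivalently, Hermitian $n\times n$ matrices). Suppose that for every $s=2,\ldots,k$, $$\lambda_s(A)+\lambda_n(B)=\lambda_s(A+B).$$ Then there exist $k-1$ nonzero, pairwise orthogonal vectors $\mathbf{x}^1,\ldots,\mathbf{x}^{k-1}$ such that for every $s=2,\ldots,k$, $$A\mathbf{x}^{s-1}=\lambda_s(A)\mathbf{x}^{s-1},\quad B\mathbf{x}^{s-1}=\lambda_n(B)\mathbf{x}^{s-1},\quad (A+B)\mathbf{x}^{s-1}=\lambda_s(A+B)\mathbf{x}^{s-1}.$$
   Context: For a self-adjoint operator (Hermitian matrix) $M$ of order $n$, its eigenvalues, counted with multiplicity, are indexed in non-increasing order as $\lambda_1(M)\geq\lambda_2(M)\geq\cdots\geq\lambda_n(M)$. *)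

theory Defs
  imports "Jordan_Normal_Form.Char_Poly" "Jordan_Normal_Form.Conjugate"
begin

definition hermitian_mat :: "nat \<Rightarrow> complex mat \<Rightarrow> bool" where
  "hermitian_mat n A \<longleftrightarrow> A \<in> carrier_mat n n \<and>
     (\<forall>i<n. \<forall>j<n. A $$ (i, j) = cnj (A $$ (j, i)))"

text \<open>Eigenvalues counted with multiplicity: roots of the characteristic polynomial,
  as real numbers (real parts; they are real for Hermitian matrices), listed in
  non-increasing order.\<close>
definition eigvals_desc :: "complex mat \<Rightarrow> real list" where
  "eigvals_desc A = rev (sorted_list_of_multiset (image_mset Re (proots (char_poly A))))"

text \<open>lambda_i(A), 1-indexed: lambda_1 >= lambda_2 >= ... >= lambda_n.\<close>
definition eig :: "complex mat \<Rightarrow> nat \<Rightarrow> real" where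
  "eig A i = eigvals_desc A ! (i - 1)"

end

theory Submission
  imports Defs "Jordan_Normal_Form.Schur_Decomposition" "Jordan_Normal_Form.Spectral_Radius"
begin

text \<open>
  For s = p + 1 choose y orthogonal to the
      eigenvectors of A below \<lambda>_s(A), those of A + B above \<lambda>_s(A + B) and the earlier x^l with
      eigenvalue \<lambda>_s(A + B); by (3) this is possible.  Then by (2)
      \<lambda>_s(A)|y|^2 \<le> \<langle>Ay,y\<rangle>, \<lambda>_n(B)|y|^2 \<le> \<langle>By,y\<rangle>, \<langle>(A+B)y,y\<rangle> \<le> \<lambda>_s(A + B)|y|^2, and the hypothesis
      \<lambda>_s(A) + \<lambda>_n(B) = \<lambda>_s(A + B) forces equality throughout, so y is a common eigenvector.
      The remaining x^l are orthogonal to y since their (A + B)-eigenvalues differ.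
\<close>

lemma cscalar_prod_sum:
  assumes "w \<in> carrier_vec n"
  shows "u \<bullet>c (w::complex vec) = (\<Sum>i\<in>{0..<n}. u$i * cnj (w$i))"
  using assms by (simp add: scalar_prod_def)

lemma cscalar_prod_cnj:
  assumes "u \<in> carrier_vec n" "w \<in> carrier_vec n"
  shows "cnj (u \<bullet>c (w::complex vec)) = w \<bullet>c u"
  using assms by (simp add: cscalar_prod_sum[of _ n] mult.commute)

lemma cscalar_prod_smult:
  assumes "x \<in> carrier_vec n" "y \<in> carrier_vec n"
  shows "(a \<cdot>\<^sub>v x) \<bullet>c (b \<cdot>\<^sub>v y) = a * cnj b * (x \<bullet>c (y :: complex vec))"
  using assms by (simp add: cscalar_prod_sum[of _ n] sum_distrib_left mult_ac)

lemma cscalar_prod_smult_left: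
  assumes "x \<in> carrier_vec n" "y \<in> carrier_vec n"
  shows "(a \<cdot>\<^sub>v x) \<bullet>c y = a * (x \<bullet>c (y :: complex vec))"
  using cscalar_prod_smult[OF assms, of a 1] by simp

lemma adjoint_cscalar_prod:
  fixes M N :: "complex mat"
  assumes M: "M \<in> carrier_mat n m" and N: "N \<in> carrier_mat m n"
    and adj: "\<And>i j. i < n \<Longrightarrow> j < m \<Longrightarrow> N $$ (j,i) = cnj (M $$ (i,j))"
    and x: "x \<in> carrier_vec m" and y: "y \<in> carrier_vec n"
  shows "(M *\<^sub>v x) \<bullet>c y = x \<bullet>c (N *\<^sub>v y)"
proof -
  have "(M *\<^sub>v x) \<bullet>c y = (\<Sum>i\<in>{0..<n}. (\<Sum>j\<in>{0..<m}. M$$(i,j) * x$j) * cnj (y$i))"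
    using M x y by (simp add: cscalar_prod_sum[of _ n] scalar_prod_def)
  also have "\<dots> = (\<Sum>i\<in>{0..<n}. \<Sum>j\<in>{0..<m}. M$$(i,j) * x$j * cnj (y$i))"
    by (simp add: sum_distrib_right)
  also have "\<dots> = (\<Sum>j\<in>{0..<m}. \<Sum>i\<in>{0..<n}. M$$(i,j) * x$j * cnj (y$i))"
    by (rule sum.swap)
  also have "\<dots> = (\<Sum>j\<in>{0..<m}. x$j * cnj (\<Sum>i\<in>{0..<n}. N$$(j,i) * y$i))"
    by (auto simp: sum_distrib_left adj intro!: sum.cong)
  also have "\<dots> = x \<bullet>c (N *\<^sub>v y)"
    using N x y by (simp add: cscalar_prod_sum[of _ m] scalar_prod_def)
  finally show ?thesis .
qed

lemma hermitian_self_adjoint: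
  assumes h: "hermitian_mat n A" and x: "x \<in> carrier_vec n" and y: "y \<in> carrier_vec n"
  shows "(A *\<^sub>v x) \<bullet>c y = x \<bullet>c (A *\<^sub>v y)"
proof -
  have A: "A \<in> carrier_mat n n" and adj: "\<And>i j. i < n \<Longrightarrow> j < n \<Longrightarrow> A $$ (j,i) = cnj (A $$ (i,j))"
    using h unfolding hermitian_mat_def by blast+
  show ?thesis by (rule adjoint_cscalar_prod[OF A A adj x y])
qed

lemma hermitian_add:
  assumes hA: "hermitian_mat n A" and hB: "hermitian_mat n B"
  shows "hermitian_mat n (A + B)"
  unfolding hermitian_mat_def
proof (intro conjI allI impI)
  have A: "A \<in> carrier_mat n n" and B: "B \<in> carrier_mat n n"
    using hA hB unfolding hermitian_mat_def by blast+
  then show "A + B \<in> carrier_mat n n" by simp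
  fix i j assume ij: "i < n" "j < n"
  have "A $$ (i,j) = cnj (A $$ (j,i))" "B $$ (i,j) = cnj (B $$ (j,i))"
    using hA hB ij unfolding hermitian_mat_def by blast+
  with A B ij show "(A + B) $$ (i,j) = cnj ((A + B) $$ (j,i))" by simp
qed

lemma hermitian_eigenvectors_orthogonal:
  assumes h: "hermitian_mat n M" and x: "x \<in> carrier_vec n" and y: "y \<in> carrier_vec n"
    and ex: "M *\<^sub>v x = complex_of_real a \<cdot>\<^sub>v x" and ey: "M *\<^sub>v y = complex_of_real b \<cdot>\<^sub>v y"
    and ab: "a \<noteq> b"
  shows "x \<bullet>c y = 0"
proof -
  have "complex_of_real a * (x \<bullet>c y) = (M *\<^sub>v x) \<bullet>c y"
    unfolding ex by (rule cscalar_prod_smult_left[OF x y, symmetric])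
  also have "\<dots> = x \<bullet>c (M *\<^sub>v y)" by (rule hermitian_self_adjoint[OF h x y])
  also have "\<dots> = complex_of_real b * (x \<bullet>c y)"
    using cscalar_prod_smult[OF x y, of 1] unfolding ey by simp
  finally have "(complex_of_real a - complex_of_real b) * (x \<bullet>c y) = 0"
    by (simp add: algebra_simps)
  thus ?thesis using ab by simp
qed

definition orthonormal :: "nat \<Rightarrow> complex vec list \<Rightarrow> bool" where
  "orthonormal n us \<longleftrightarrow> length us = n \<and> set us \<subseteq> carrier_vec n \<and>
     (\<forall>i<n. \<forall>j<n. us!i \<bullet>c us!j = (if i = j then 1 else 0))"

lemma unitary_of_orthonormal:
  assumes o: "orthonormal n us"
  defines "P \<equiv> mat_of_cols n us" and "Q \<equiv> mat_of_rows n (map conjugate us)"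
  shows "P \<in> carrier_mat n n" "Q \<in> carrier_mat n n" "Q * P = 1\<^sub>m n" "P * Q = 1\<^sub>m n"
    "\<And>i j. i < n \<Longrightarrow> j < n \<Longrightarrow> Q $$ (j,i) = cnj (P $$ (i,j))"
    "\<And>i. i < n \<Longrightarrow> col P i = us ! i"
    "\<And>i y. i < n \<Longrightarrow> y \<in> carrier_vec n \<Longrightarrow> (Q *\<^sub>v y) $ i = y \<bullet>c us ! i"
proof -
  from o have len: "length us = n" and car: "set us \<subseteq> carrier_vec n"
    and on: "\<And>i j. i<n \<Longrightarrow> j<n \<Longrightarrow> us!i \<bullet>c us!j = (if i = j then 1 else 0)"
    unfolding orthonormal_def by auto
  have usi: "\<And>i. i < n \<Longrightarrow> us ! i \<in> carrier_vec n" using car len by auto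
  show P: "P \<in> carrier_mat n n" and Q: "Q \<in> carrier_mat n n"
    unfolding P_def Q_def using len by auto
  show QP: "Q * P = 1\<^sub>m n"
  proof (rule eq_matI)
    fix i j assume "i < dim_row (1\<^sub>m n :: complex mat)" "j < dim_col (1\<^sub>m n :: complex mat)"
    hence i: "i < n" and j: "j < n" by auto
    have "(Q * P) $$ (i,j) = conjugate (us!i) \<bullet> (us ! j)"
      using P Q i j len usi unfolding Q_def P_def by (simp add: mat_of_rows_row)
    also have "\<dots> = us ! j \<bullet>c us ! i"
      by (rule comm_scalar_prod[of _ n], insert usi i j, auto)
    finally show "(Q * P) $$ (i,j) = 1\<^sub>m n $$ (i,j)" using on[OF j i] i j by auto
  qed (use P Q in auto)
  show "P * Q = 1\<^sub>m n" by (rule mat_mult_left_right_inverse[OF Q P QP])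
  have cj: "\<And>i j. i < n \<Longrightarrow> j < n \<Longrightarrow> conjugate (us ! j) $ i = cnj (us ! j $ i)"
  proof -
    fix i j assume i: "i < n" and j: "j < n"
    have "i < dim_vec (us ! j)" using usi[OF j] i by auto
    thus "conjugate (us ! j) $ i = cnj (us ! j $ i)" by simp
  qed
  show "\<And>i j. i < n \<Longrightarrow> j < n \<Longrightarrow> Q $$ (j,i) = cnj (P $$ (i,j))"
    unfolding P_def Q_def using len usi cj by (simp add: mat_of_rows_index mat_of_cols_index)
  show "\<And>i. i < n \<Longrightarrow> col P i = us ! i" unfolding P_def using len usi by simp
  fix i and y :: "complex vec" assume i: "i < n" and y: "y \<in> carrier_vec n"
  have "(Q *\<^sub>v y) $ i = conjugate (us ! i) \<bullet> y"
    using Q i y len usi unfolding Q_def by (simp add: mat_of_rows_row)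
  also have "\<dots> = y \<bullet>c us ! i" by (rule comm_scalar_prod[of _ n], insert y usi[OF i], auto)
  finally show "(Q *\<^sub>v y) $ i = y \<bullet>c us ! i" .
qed

lemma unitary_cscalar_prod:
  assumes o: "orthonormal n us" and u: "u \<in> carrier_vec n" and w: "w \<in> carrier_vec n"
  shows "(mat_of_cols n us *\<^sub>v u) \<bullet>c (mat_of_cols n us *\<^sub>v w) = u \<bullet>c w"
proof -
  note U = unitary_of_orthonormal[OF o]
  have "(mat_of_cols n us *\<^sub>v u) \<bullet>c (mat_of_cols n us *\<^sub>v w)
      = u \<bullet>c (mat_of_rows n (map conjugate us) *\<^sub>v (mat_of_cols n us *\<^sub>v w))"
    using U(1,2) w by (intro adjoint_cscalar_prod[OF U(1,2) U(5) u]) auto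
  also have "mat_of_rows n (map conjugate us) *\<^sub>v (mat_of_cols n us *\<^sub>v w) = w"
    using U(1-3) w by (simp add: assoc_mult_mat_vec[symmetric])
  finally show ?thesis .
qed

definition normalize_vec :: "complex vec \<Rightarrow> complex vec" where
  "normalize_vec w = complex_of_real (1 / sqrt (Re (w \<bullet>c w))) \<cdot>\<^sub>v w"

lemma normalize_vec:
  assumes w: "w \<in> carrier_vec n" "w \<noteq> 0\<^sub>v n"
  shows "normalize_vec w \<in> carrier_vec n" "normalize_vec w \<bullet>c normalize_vec w = 1"
proof -
  show "normalize_vec w \<in> carrier_vec n" unfolding normalize_vec_def using w by auto
  define r where "r = Re (w \<bullet>c w)"
  have "w \<bullet>c w > 0" using conjugate_square_greater_0_vec[OF w(1)] w(2) by auto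
  hence r: "r > 0" "w \<bullet>c w = complex_of_real r"
    unfolding r_def by (auto simp: less_complex_def complex_eq_iff)
  have "normalize_vec w \<bullet>c normalize_vec w
      = complex_of_real (1 / sqrt r) * cnj (complex_of_real (1 / sqrt r)) * complex_of_real r"
    unfolding normalize_vec_def r_def[symmetric] cscalar_prod_smult[OF w(1) w(1)] r(2)
    by (simp only: Re_complex_of_real)
  also have "\<dots> = complex_of_real ((1 / sqrt r) * (1 / sqrt r) * r)"
    by (simp only: complex_cnj_complex_of_real of_real_mult)
  also have "(1 / sqrt r) * (1 / sqrt r) * r = 1" using r by (simp add: field_simps)
  finally show "normalize_vec w \<bullet>c normalize_vec w = 1" by simp
qed

lemma orthonormal_basis_extension:
  assumes v: "v \<in> carrier_vec n" and v1: "v \<bullet>c v = 1"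
  shows "\<exists>us. orthonormal n us \<and> us ! 0 = v"
proof -
  have v0: "v \<noteq> 0\<^sub>v n" using v1 v by auto
  interpret cof_vec_space n "TYPE(complex)" .
  define b where "b = basis_completion v"
  from basis_completion[OF v v0, folded b_def]
  have dist_b: "distinct b" and indep: "\<not> lin_dep (set b)" and bcar: "set b \<subseteq> carrier_vec n"
    and hdb: "hd b = v" and len_b: "length b = n" by auto
  have "n \<noteq> 0"
  proof
    assume "n = 0"
    with v have "v = 0\<^sub>v n" by (intro eq_vecI) auto
    with v0 show False ..
  qed
  with hdb len_b obtain bs where bv: "b = v # bs" by (cases b, auto)
  define ws where "ws = gram_schmidt n b"
  from gram_schmidt_result[OF bcar dist_b indep ws_def]
  have ws: "set ws \<subseteq> carrier_vec n" "corthogonal ws" "length ws = n" by (auto simp: len_b)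
  from gram_schmidt_hd[OF v, of bs, folded bv] have hdws: "hd ws = v" unfolding ws_def .
  have wsi: "\<And>i. i < n \<Longrightarrow> ws ! i \<in> carrier_vec n" using ws by auto
  have ws0: "\<And>i. i < n \<Longrightarrow> ws ! i \<noteq> 0\<^sub>v n"
  proof
    fix i assume i: "i < n" and z: "ws ! i = 0\<^sub>v n"
    have "ws ! i \<bullet>c ws ! i \<noteq> 0" using corthogonalD[OF ws(2), of i i] i ws(3) by auto
    thus False using z by simp
  qed
  define us where "us = map normalize_vec ws"
  have on: "orthonormal n us"
    unfolding orthonormal_def
  proof (intro conjI allI impI)
    show "length us = n" unfolding us_def using ws by simp
    show "set us \<subseteq> carrier_vec n" unfolding us_def using normalize_vec(1)[OF wsi ws0] ws(3)
      by (auto simp: in_set_conv_nth)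
    fix i j assume i: "i < n" and j: "j < n"
    show "us ! i \<bullet>c us ! j = (if i = j then 1 else 0)"
    proof (cases "i = j")
      case True
      thus ?thesis unfolding us_def using i ws(3) normalize_vec(2)[OF wsi ws0] by simp
    next
      case False
      have "ws ! i \<bullet>c ws ! j = 0" using corthogonalD[OF ws(2), of i j] i j ws(3) False by auto
      thus ?thesis unfolding us_def normalize_vec_def using i j ws(3) False
        by (simp add: cscalar_prod_smult[OF wsi[OF i] wsi[OF j]])
    qed
  qed
  have "ws \<noteq> []" using ws(3) \<open>n \<noteq> 0\<close> by auto
  hence "ws ! 0 = v" using hdws hd_conv_nth by metis
  hence "us ! 0 = normalize_vec v" unfolding us_def using \<open>ws \<noteq> []\<close> by simp
  moreover have "normalize_vec v = v" unfolding normalize_vec_def v1 by simp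
  ultimately show ?thesis using on by auto
qed

definition eigenbasis :: "nat \<Rightarrow> complex mat \<Rightarrow> complex vec list \<Rightarrow> (nat \<Rightarrow> real) \<Rightarrow> bool" where
  "eigenbasis n M vs d \<longleftrightarrow> orthonormal n vs \<and>
     (\<forall>i<n. M *\<^sub>v vs ! i = complex_of_real (d i) \<cdot>\<^sub>v vs ! i)"

lemma hermitian_unit_eigenvector:
  assumes h: "hermitian_mat n A" and n: "0 < n"
  shows "\<exists>v e. v \<in> carrier_vec n \<and> v \<bullet>c v = 1 \<and> A *\<^sub>v v = complex_of_real e \<cdot>\<^sub>v v"
proof -
  have A: "A \<in> carrier_mat n n" using h unfolding hermitian_mat_def by blast
  obtain \<mu> where "eigenvalue A \<mu>" using spectrum_non_empty[OF A n] unfolding spectrum_def by auto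
  then obtain w where "eigenvector A w \<mu>" unfolding eigenvalue_def by auto
  hence w: "w \<in> carrier_vec n" "w \<noteq> 0\<^sub>v n" and Aw: "A *\<^sub>v w = \<mu> \<cdot>\<^sub>v w"
    unfolding eigenvector_def using A by auto
  define v where "v = normalize_vec w"
  have v: "v \<in> carrier_vec n" "v \<bullet>c v = 1" using normalize_vec[OF w] unfolding v_def by auto
  have Av: "A *\<^sub>v v = \<mu> \<cdot>\<^sub>v v"
    unfolding v_def normalize_vec_def using A w Aw
    by (simp add: mult_mat_vec[OF A w(1)] smult_smult_assoc mult.commute)
  text \<open>The eigenvalue is real because A is self-adjoint.\<close>
  have "\<mu> = (A *\<^sub>v v) \<bullet>c v" using cscalar_prod_smult_left[OF v(1) v(1), of \<mu>] v(2) Av by simp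
  also have "\<dots> = v \<bullet>c (A *\<^sub>v v)" by (rule hermitian_self_adjoint[OF h v(1) v(1)])
  also have "\<dots> = cnj \<mu>" using cscalar_prod_smult[OF v(1) v(1), of 1 \<mu>] v(2) Av by simp
  finally have "Im \<mu> = 0" by (simp add: complex_eq_iff)
  then obtain e where "\<mu> = complex_of_real e" using complex_is_Real_iff Reals_cases by metis
  with v Av show ?thesis by blast
qed

lemma hermitian_deflation:
  assumes h: "hermitian_mat n A" and o: "orthonormal n us" and n: "0 < n"
    and ev: "A *\<^sub>v us ! 0 = complex_of_real e \<cdot>\<^sub>v us ! 0"
  defines "A' \<equiv> mat_of_rows n (map conjugate us) * A * mat_of_cols n us"
  shows "hermitian_mat n A'"
    "\<And>i. i < n \<Longrightarrow> A' $$ (i,0) = (if i = 0 then complex_of_real e else 0)"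
    "\<And>j. j < n \<Longrightarrow> A' $$ (0,j) = (if j = 0 then complex_of_real e else 0)"
proof -
  note U = unitary_of_orthonormal[OF o]
  have A: "A \<in> carrier_mat n n" using h unfolding hermitian_mat_def by blast
  have usi: "\<And>i. i < n \<Longrightarrow> us ! i \<in> carrier_vec n" and len: "length us = n"
    and uson: "\<And>i j. i < n \<Longrightarrow> j < n \<Longrightarrow> us ! i \<bullet>c us ! j = (if i = j then 1 else 0)"
    using o unfolding orthonormal_def by auto
  have A': "A' \<in> carrier_mat n n" unfolding A'_def using U(1,2) A by auto
  have entry: "\<And>i j. i < n \<Longrightarrow> j < n \<Longrightarrow> A' $$ (i,j) = (A *\<^sub>v us ! j) \<bullet>c us ! i"
  proof -
    fix i j assume i: "i < n" and j: "j < n"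
    let ?W = "mat_of_cols n us" and ?W' = "mat_of_rows n (map conjugate us)"
    have "A' $$ (i,j) = (?W' * (A * ?W)) $$ (i,j)" unfolding A'_def using U(1,2) A by simp
    also have "\<dots> = row ?W' i \<bullet> col (A * ?W) j" using U(1,2) A i j by (intro index_mult_mat) auto
    also have "col (A * ?W) j = A *\<^sub>v us ! j" using col_mult2[OF A U(1) j] U(6)[OF j] by simp
    also have "row ?W' i \<bullet> (A *\<^sub>v us ! j) = (?W' *\<^sub>v (A *\<^sub>v us ! j)) $ i" using len i by simp
    also have "\<dots> = (A *\<^sub>v us ! j) \<bullet>c us ! i" using U(7)[OF i] A usi[OF j] by simp
    finally show "A' $$ (i,j) = (A *\<^sub>v us ! j) \<bullet>c us ! i" .
  qed
  show herm: "hermitian_mat n A'" unfolding hermitian_mat_def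
  proof (intro conjI allI impI)
    fix i j assume i: "i < n" and j: "j < n"
    have "cnj (A' $$ (j,i)) = cnj (us ! i \<bullet>c (A *\<^sub>v us ! j))"
      using entry[OF j i] hermitian_self_adjoint[OF h usi[OF i] usi[OF j]] by simp
    also have "\<dots> = (A *\<^sub>v us ! j) \<bullet>c us ! i"
      by (rule cscalar_prod_cnj, insert usi[OF i] usi[OF j] A, auto)
    finally show "A' $$ (i,j) = cnj (A' $$ (j,i))" using entry[OF i j] by simp
  qed (rule A')
  show col: "\<And>i. i < n \<Longrightarrow> A' $$ (i,0) = (if i = 0 then complex_of_real e else 0)"
  proof -
    fix i assume i: "i < n"
    have "A' $$ (i,0) = complex_of_real e * (us ! 0 \<bullet>c us ! i)"
      using entry[OF i n] ev cscalar_prod_smult_left[OF usi[OF n] usi[OF i]] by simp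
    thus "A' $$ (i,0) = (if i = 0 then complex_of_real e else 0)" using uson[OF n i] by simp
  qed
  fix j assume j: "j < n"
  have "A' $$ (0,j) = cnj (A' $$ (j,0))" using herm j n unfolding hermitian_mat_def by blast
  thus "A' $$ (0,j) = (if j = 0 then complex_of_real e else 0)" using col[OF j] by simp
qed

lemma smult_vCons: "c \<cdot>\<^sub>v vCons a (x :: 'a :: ring vec) = vCons (c * a) (c \<cdot>\<^sub>v x)"
  by (rule eq_vecI, auto simp: vec_index_vCons)

lemma row_vCons:
  assumes "M \<in> carrier_mat m (Suc n)" "i < m"
  shows "row M i = vCons (M $$ (i,0)) (vec n (\<lambda>j. M $$ (i, Suc j)))"
  by (rule eq_vecI, insert assms, auto simp: vec_index_vCons)

lemma block_mult_vCons:
  fixes A' :: "complex mat"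
  assumes A': "A' \<in> carrier_mat (Suc n) (Suc n)" and e: "A' $$ (0,0) = e"
    and r0: "\<And>j. j < n \<Longrightarrow> A' $$ (0, Suc j) = 0"
    and c0: "\<And>i. i < n \<Longrightarrow> A' $$ (Suc i, 0) = 0"
    and t: "t \<in> carrier_vec n"
  shows "A' *\<^sub>v vCons a t = vCons (e * a) (mat n n (\<lambda>(i,j). A' $$ (Suc i, Suc j)) *\<^sub>v t)"
proof (rule eq_vecI)
  fix i assume "i < dim_vec (vCons (e * a) (mat n n (\<lambda>(i,j). A' $$ (Suc i, Suc j)) *\<^sub>v t))"
  hence i: "i < Suc n" by auto
  have eq: "(A' *\<^sub>v vCons a t) $ i = A' $$ (i,0) * a + vec n (\<lambda>j. A' $$ (i, Suc j)) \<bullet> t"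
    using A' i row_vCons[OF A' i] by simp
  show "(A' *\<^sub>v vCons a t) $ i = vCons (e * a) (mat n n (\<lambda>(i,j). A' $$ (Suc i, Suc j)) *\<^sub>v t) $ i"
  proof (cases i)
    case 0
    have "vec n (\<lambda>j. A' $$ (0, Suc j)) = 0\<^sub>v n" by (rule eq_vecI, auto simp: r0)
    thus ?thesis using eq 0 e t by simp
  next
    case (Suc i')
    with i have i': "i' < n" by auto
    show ?thesis using eq Suc i' c0 t by (simp add: row_mat)
  qed
qed (use A' in auto)

lemma eigenbasis_block:
  assumes A': "A' \<in> carrier_mat (Suc n) (Suc n)"
    and col0: "\<And>i. i < Suc n \<Longrightarrow> A' $$ (i,0) = (if i = 0 then complex_of_real e else 0)"
    and row0: "\<And>j. j < Suc n \<Longrightarrow> A' $$ (0,j) = (if j = 0 then complex_of_real e else 0)"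
    and eb: "eigenbasis n (mat n n (\<lambda>(i,j). A' $$ (Suc i, Suc j))) ts d"
  shows "eigenbasis (Suc n) A' (vCons 1 (0\<^sub>v n) # map (vCons 0) ts) (case_nat e d)"
proof -
  define A3 where "A3 = mat n n (\<lambda>(i,j). A' $$ (Suc i, Suc j))"
  define zs where "zs = vCons 1 (0\<^sub>v n) # map (vCons 0) ts"
  have tsi: "\<And>i. i < n \<Longrightarrow> ts ! i \<in> carrier_vec n" and lts: "length ts = n"
    and tson: "\<And>i j. i < n \<Longrightarrow> j < n \<Longrightarrow> ts ! i \<bullet>c ts ! j = (if i = j then 1 else 0)"
    and tev: "\<And>i. i < n \<Longrightarrow> A3 *\<^sub>v ts ! i = complex_of_real (d i) \<cdot>\<^sub>v ts ! i"
    using eb unfolding eigenbasis_def orthonormal_def A3_def by auto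
  have blk: "\<And>a t. t \<in> carrier_vec n \<Longrightarrow> A' *\<^sub>v vCons a t = vCons (complex_of_real e * a) (A3 *\<^sub>v t)"
    unfolding A3_def using col0 row0 by (intro block_mult_vCons[OF A']) auto
  have zsi: "\<And>i. i < Suc n \<Longrightarrow> zs ! i \<in> carrier_vec (Suc n)"
    unfolding zs_def using tsi lts by (auto simp: nth_Cons split: nat.splits)
  have "orthonormal (Suc n) zs"
    unfolding orthonormal_def
  proof (intro conjI allI impI)
    show "length zs = Suc n" unfolding zs_def using lts by simp
    show "set zs \<subseteq> carrier_vec (Suc n)" using zsi \<open>length zs = Suc n\<close>
      by (auto simp: in_set_conv_nth)
    fix i j assume i: "i < Suc n" and j: "j < Suc n"
    show "zs ! i \<bullet>c zs ! j = (if i = j then 1 else 0)"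
    proof (cases i; cases j)
      fix i' j' assume "i = Suc i'" and "j = Suc j'"
      thus ?thesis unfolding zs_def using i j lts tson[of i' j'] tsi[of i'] tsi[of j'] by simp
    next
      fix j' assume "i = 0" and jj: "j = Suc j'"
      have "0\<^sub>v n \<bullet>c ts ! j' = 0" using tsi[of j'] j jj by simp
      thus ?thesis unfolding zs_def using \<open>i = 0\<close> jj j lts by simp
    next
      fix i' assume ii: "i = Suc i'" and "j = 0"
      have "ts ! i' \<bullet>c 0\<^sub>v n = 0" using tsi[of i'] i ii by simp
      thus ?thesis unfolding zs_def using ii \<open>j = 0\<close> i lts by simp
    qed (simp add: zs_def)
  qed
  moreover have "A' *\<^sub>v zs ! i = complex_of_real (case_nat e d i) \<cdot>\<^sub>v zs ! i" if i: "i < Suc n" for i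
  proof (cases i)
    case 0
    have "A3 *\<^sub>v 0\<^sub>v n = 0\<^sub>v n" unfolding A3_def by (rule eq_vecI, auto)
    moreover have "\<And>c. c \<cdot>\<^sub>v 0\<^sub>v n = (0\<^sub>v n :: complex vec)" by (rule eq_vecI, auto)
    ultimately show ?thesis using 0 blk[of "0\<^sub>v n" 1] unfolding zs_def by (simp add: smult_vCons)
  next
    case (Suc i')
    with i have i': "i' < n" by auto
    show ?thesis using Suc blk[OF tsi[OF i'], of 0] tev[OF i'] lts i'
      unfolding zs_def by (simp add: smult_vCons)
  qed
  ultimately show ?thesis unfolding eigenbasis_def zs_def by blast
qed

lemma eigenbasis_unitary_conj:
  assumes A: "A \<in> carrier_mat n n" and o: "orthonormal n us"
    and eb: "eigenbasis n (mat_of_rows n (map conjugate us) * A * mat_of_cols n us) zs d"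
  shows "eigenbasis n A (map (\<lambda>z. mat_of_cols n us *\<^sub>v z) zs) d"
proof -
  define W where "W = mat_of_cols n us"
  define W' where "W' = mat_of_rows n (map conjugate us)"
  note U = unitary_of_orthonormal[OF o, folded W_def W'_def]
  have W: "W \<in> carrier_mat n n" and W': "W' \<in> carrier_mat n n" using U by auto
  have zsi: "\<And>i. i < n \<Longrightarrow> zs ! i \<in> carrier_vec n" and lzs: "length zs = n"
    and zson: "\<And>i j. i < n \<Longrightarrow> j < n \<Longrightarrow> zs ! i \<bullet>c zs ! j = (if i = j then 1 else 0)"
    and zev: "\<And>i. i < n \<Longrightarrow> (W' * A * W) *\<^sub>v zs ! i = complex_of_real (d i) \<cdot>\<^sub>v zs ! i"
    using eb unfolding eigenbasis_def orthonormal_def W_def W'_def by auto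
  have AW: "A * W = W * (W' * A * W)"
  proof -
    have "W * (W' * A * W) = W * (W' * (A * W))" using W W' A by simp
    also have "\<dots> = (W * W') * (A * W)" using W W' A by (intro assoc_mult_mat[symmetric]) auto
    also have "\<dots> = A * W" using U(4) A W by simp
    finally show ?thesis by simp
  qed
  have "orthonormal n (map (\<lambda>z. W *\<^sub>v z) zs)" unfolding orthonormal_def
  proof (intro conjI allI impI)
    show "length (map (\<lambda>z. W *\<^sub>v z) zs) = n" using lzs by simp
    show "set (map (\<lambda>z. W *\<^sub>v z) zs) \<subseteq> carrier_vec n"
      using zsi lzs W by (auto simp: in_set_conv_nth)
    fix i j assume i: "i < n" and j: "j < n"
    show "map (\<lambda>z. W *\<^sub>v z) zs ! i \<bullet>c map (\<lambda>z. W *\<^sub>v z) zs ! j = (if i = j then 1 else 0)"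
      using unitary_cscalar_prod[OF o zsi[OF i] zsi[OF j]] zson[OF i j] i j lzs
      unfolding W_def by simp
  qed
  moreover have "A *\<^sub>v (W *\<^sub>v zs ! i) = complex_of_real (d i) \<cdot>\<^sub>v (W *\<^sub>v zs ! i)" if i: "i < n" for i
  proof -
    have "A *\<^sub>v (W *\<^sub>v zs ! i) = W *\<^sub>v ((W' * A * W) *\<^sub>v zs ! i)"
      using A W W' zsi[OF i] AW by (metis assoc_mult_mat_vec mult_carrier_mat)
    thus ?thesis unfolding zev[OF i] by (simp add: mult_mat_vec[OF W zsi[OF i]])
  qed
  ultimately show ?thesis using lzs unfolding eigenbasis_def W_def by simp
qed

theorem hermitian_eigenbasis:
  assumes "hermitian_mat n A"
  shows "\<exists>vs d. eigenbasis n A vs d"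
  using assms
proof (induction n arbitrary: A)
  case 0
  show ?case by (intro exI[of _ "[]"]) (auto simp: eigenbasis_def orthonormal_def)
next
  case (Suc n A)
  have A: "A \<in> carrier_mat (Suc n) (Suc n)" using Suc.prems unfolding hermitian_mat_def by blast
  obtain v e where v: "v \<in> carrier_vec (Suc n)" "v \<bullet>c v = 1"
    and Av: "A *\<^sub>v v = complex_of_real e \<cdot>\<^sub>v v"
    using hermitian_unit_eigenvector[OF Suc.prems] by auto
  obtain us where o: "orthonormal (Suc n) us" and us0: "us ! 0 = v"
    using orthonormal_basis_extension[OF v] by auto
  define A' where "A' = mat_of_rows (Suc n) (map conjugate us) * A * mat_of_cols (Suc n) us"
  note D = hermitian_deflation[OF Suc.prems o zero_less_Suc Av[folded us0], folded A'_def]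
  have "hermitian_mat n (mat n n (\<lambda>(i,j). A' $$ (Suc i, Suc j)))"
    unfolding hermitian_mat_def
  proof (intro conjI allI impI)
    fix i j assume ij: "i < n" "j < n"
    have "A' $$ (Suc i, Suc j) = cnj (A' $$ (Suc j, Suc i))"
      using D(1) ij unfolding hermitian_mat_def by (meson Suc_mono)
    with ij show "mat n n (\<lambda>(i,j). A' $$ (Suc i, Suc j)) $$ (i, j)
        = cnj (mat n n (\<lambda>(i,j). A' $$ (Suc i, Suc j)) $$ (j, i))" by simp
  qed simp
  then obtain ts d where "eigenbasis n (mat n n (\<lambda>(i,j). A' $$ (Suc i, Suc j))) ts d"
    using Suc.IH by blast
  from eigenbasis_block[OF _ D(2,3) this] D(1)
  have "eigenbasis (Suc n) A' (vCons 1 (0\<^sub>v n) # map (vCons 0) ts) (case_nat e d)"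
    unfolding hermitian_mat_def by blast
  from eigenbasis_unitary_conj[OF A o this[unfolded A'_def]] show ?case by blast
qed

lemma eigenbasis_diagonalizes:
  assumes A: "A \<in> carrier_mat n n" and eb: "eigenbasis n A vs d"
  shows "A * mat_of_cols n vs = mat_of_cols n vs * mat_diag n (\<lambda>i. complex_of_real (d i))"
proof -
  have o: "orthonormal n vs" and ev: "\<And>j. j < n \<Longrightarrow> A *\<^sub>v vs ! j = complex_of_real (d j) \<cdot>\<^sub>v vs ! j"
    using eb unfolding eigenbasis_def by auto
  have len: "length vs = n" and vsi: "\<And>j. j < n \<Longrightarrow> vs ! j \<in> carrier_vec n"
    using o unfolding orthonormal_def by auto
  note U = unitary_of_orthonormal[OF o]
  show ?thesis
  proof (rule eq_matI)
    fix i j assume "i < dim_row (mat_of_cols n vs * mat_diag n (\<lambda>i. complex_of_real (d i)))"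
      and "j < dim_col (mat_of_cols n vs * mat_diag n (\<lambda>i. complex_of_real (d i)))"
    hence i: "i < n" and j: "j < n" by (auto simp: mat_diag_def)
    have "(A * mat_of_cols n vs) $$ (i,j) = (A *\<^sub>v col (mat_of_cols n vs) j) $ i"
      using A U(1) i j len by (simp add: carrier_matD)
    also have "\<dots> = complex_of_real (d j) * vs ! j $ i" using U(6)[OF j] ev[OF j] vsi[OF j] i by simp
    also have "\<dots> = (mat_of_cols n vs * mat_diag n (\<lambda>i. complex_of_real (d i))) $$ (i,j)"
      using mat_diag_mult_right[OF U(1)] i j len by (simp add: mat_of_cols_index mult.commute)
    finally show "(A * mat_of_cols n vs) $$ (i,j)
        = (mat_of_cols n vs * mat_diag n (\<lambda>i. complex_of_real (d i))) $$ (i,j)" .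
  qed (use A U(1) len in \<open>auto simp: mat_diag_def\<close>)
qed

lemma proots_linear_factors: "proots (\<Prod>a\<leftarrow>xs. [:- a, 1:]) = mset (xs :: complex list)"
proof (induction xs)
  case (Cons a xs)
  have "(\<Prod>a\<leftarrow>xs. [:- a, 1:]) \<noteq> 0" by (auto simp: prod_list_zero_iff)
  hence "proots (\<Prod>a\<leftarrow>a # xs. [:- a, 1:]) = proots [:- a, 1:] + proots (\<Prod>a\<leftarrow>xs. [:- a, 1:])"
    using proots_mult[of "[:- a, 1:]" "\<Prod>a\<leftarrow>xs. [:- a, 1:]"] by simp
  thus ?case using Cons by simp
qed simp

lemma eigenbasis_eigenvalues:
  assumes A: "A \<in> carrier_mat n n" and eb: "eigenbasis n A vs d"
  shows "image_mset Re (proots (char_poly A)) = mset (map d [0..<n])"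
proof -
  define D where "D = mat_diag n (\<lambda>i. complex_of_real (d i))"
  define W where "W = mat_of_cols n vs"
  define W' where "W' = mat_of_rows n (map conjugate vs)"
  have o: "orthonormal n vs" using eb unfolding eigenbasis_def by auto
  note U = unitary_of_orthonormal[OF o, folded W_def W'_def]
  have AW: "A * W = W * D" using eigenbasis_diagonalizes[OF A eb] unfolding W_def D_def .
  have D: "D \<in> carrier_mat n n" unfolding D_def by simp
  have "similar_mat_wit A D W W'"
    unfolding similar_mat_wit_def Let_def
  proof (intro conjI)
    show "{A, D, W, W'} \<subseteq> carrier_mat (dim_row A) (dim_row A)" using A U(1,2) D by auto
    show "W * W' = 1\<^sub>m (dim_row A)" "W' * W = 1\<^sub>m (dim_row A)" using U(3,4) A by auto
    have "W * D * W' = A * (W * W')" using AW A U(1,2) by (metis assoc_mult_mat)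
    thus "A = W * D * W'" using U(4) A by simp
  qed
  hence "char_poly A = char_poly D" by (intro char_poly_similar) (auto simp: similar_mat_def)
  also have "\<dots> = (\<Prod>a\<leftarrow>diag_mat D. [:- a, 1:])"
    by (rule char_poly_upper_triangular[OF D], auto simp: upper_triangular_def D_def mat_diag_def)
  also have "diag_mat D = map (\<lambda>i. complex_of_real (d i)) [0..<n]"
    unfolding diag_mat_def D_def mat_diag_def by auto
  finally have "proots (char_poly A) = mset (map (\<lambda>i. complex_of_real (d i)) [0..<n])"
    by (simp only: proots_linear_factors)
  thus ?thesis by (simp add: multiset.map_comp o_def)
qed

lemma mat_diag_mult_vec:
  assumes "z \<in> carrier_vec n"
  shows "mat_diag n f *\<^sub>v z = vec n (\<lambda>i. f i * z $ i)"
proof (rule eq_vecI)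
  fix i assume "i < dim_vec (vec n (\<lambda>i. f i * z $ i))"
  hence i: "i < n" by simp
  have "(mat_diag n f *\<^sub>v z) $ i = (\<Sum>j\<in>{0..<n}. (if i = j then f j else 0) * z $ j)"
    using i assms by (simp add: mat_diag_def scalar_prod_def)
  also have "\<dots> = (\<Sum>j\<in>{0..<n}. if i = j then f j * z $ j else 0)" by (rule sum.cong) auto
  finally show "(mat_diag n f *\<^sub>v z) $ i = vec n (\<lambda>i. f i * z $ i) $ i" using i by simp
qed (simp add: mat_diag_def)

lemma rayleigh_expansion:
  assumes A: "A \<in> carrier_mat n n" and eb: "eigenbasis n A vs d" and y: "y \<in> carrier_vec n"
  shows "Re ((A *\<^sub>v y) \<bullet>c y) = (\<Sum>i\<in>{0..<n}. d i * (cmod (y \<bullet>c vs ! i))\<^sup>2)"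
    and "Re (y \<bullet>c y) = (\<Sum>i\<in>{0..<n}. (cmod (y \<bullet>c vs ! i))\<^sup>2)"
    and "(\<forall>i<n. d i = t \<or> y \<bullet>c vs ! i = 0) \<Longrightarrow> A *\<^sub>v y = complex_of_real t \<cdot>\<^sub>v y"
proof -
  define D where "D = mat_diag n (\<lambda>i. complex_of_real (d i))"
  define W where "W = mat_of_cols n vs"
  define W' where "W' = mat_of_rows n (map conjugate vs)"
  have o: "orthonormal n vs" using eb unfolding eigenbasis_def by auto
  note U = unitary_of_orthonormal[OF o, folded W_def W'_def]
  have AW: "A * W = W * D" using eigenbasis_diagonalizes[OF A eb] unfolding W_def D_def .
  define z where "z = W' *\<^sub>v y"
  have z: "z \<in> carrier_vec n" unfolding z_def using U(2) y by simp
  have zi: "\<And>i. i < n \<Longrightarrow> z $ i = y \<bullet>c vs ! i" unfolding z_def using U(7) y by simp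
  have yz: "y = W *\<^sub>v z" unfolding z_def using U(1,2,4) y by (simp add: assoc_mult_mat_vec[symmetric])
  have Dz: "D *\<^sub>v z = vec n (\<lambda>i. complex_of_real (d i) * z $ i)"
    unfolding D_def by (rule mat_diag_mult_vec[OF z])
  have "A *\<^sub>v y = (A * W) *\<^sub>v z" unfolding yz using A U(1) z by simp
  also have "\<dots> = W *\<^sub>v (D *\<^sub>v z)"
    unfolding AW by (rule assoc_mult_mat_vec[OF U(1) _ z]) (simp add: D_def)
  finally have Ay: "A *\<^sub>v y = W *\<^sub>v (D *\<^sub>v z)" .
  have unit: "\<And>u w. u \<in> carrier_vec n \<Longrightarrow> w \<in> carrier_vec n \<Longrightarrow> (W *\<^sub>v u) \<bullet>c (W *\<^sub>v w) = u \<bullet>c w"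
    unfolding W_def by (rule unitary_cscalar_prod[OF o])
  have sq: "\<And>c::complex. Re (c * cnj c) = (cmod c)\<^sup>2"
    by (metis Re_complex_of_real complex_norm_square)
  have Dzc: "D *\<^sub>v z \<in> carrier_vec n" unfolding Dz by simp
  have "(A *\<^sub>v y) \<bullet>c y = (D *\<^sub>v z) \<bullet>c z" unfolding Ay using unit[OF Dzc z] yz by simp
  also have "\<dots> = (\<Sum>i\<in>{0..<n}. complex_of_real (d i) * (z $ i * cnj (z $ i)))"
    unfolding Dz using z by (simp add: cscalar_prod_sum[of _ n] mult.assoc)
  finally show "Re ((A *\<^sub>v y) \<bullet>c y) = (\<Sum>i\<in>{0..<n}. d i * (cmod (y \<bullet>c vs ! i))\<^sup>2)"
    using zi sq by simp
  have "y \<bullet>c y = z \<bullet>c z" using unit[OF z z] yz by simp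
  also have "\<dots> = (\<Sum>i\<in>{0..<n}. z $ i * cnj (z $ i))" using z by (simp add: cscalar_prod_sum[of _ n])
  finally show "Re (y \<bullet>c y) = (\<Sum>i\<in>{0..<n}. (cmod (y \<bullet>c vs ! i))\<^sup>2)"
    using zi sq by simp
  assume concentrated: "\<forall>i<n. d i = t \<or> y \<bullet>c vs ! i = 0"
  have "D *\<^sub>v z = complex_of_real t \<cdot>\<^sub>v z"
    unfolding Dz using concentrated zi z by (intro eq_vecI) auto
  hence "A *\<^sub>v y = W *\<^sub>v (complex_of_real t \<cdot>\<^sub>v z)" using Ay by simp
  thus "A *\<^sub>v y = complex_of_real t \<cdot>\<^sub>v y" unfolding yz by (simp add: mult_mat_vec[OF U(1) z])
qed

lemma rayleigh_lower:
  assumes A: "A \<in> carrier_mat n n" and eb: "eigenbasis n A vs d" and y: "y \<in> carrier_vec n"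
    and t: "\<forall>i<n. y \<bullet>c vs ! i \<noteq> 0 \<longrightarrow> t \<le> d i"
  shows "t * Re (y \<bullet>c y) \<le> Re ((A *\<^sub>v y) \<bullet>c y)"
    and "t * Re (y \<bullet>c y) = Re ((A *\<^sub>v y) \<bullet>c y) \<Longrightarrow> A *\<^sub>v y = complex_of_real t \<cdot>\<^sub>v y"
proof -
  let ?w = "\<lambda>i. (d i - t) * (cmod (y \<bullet>c vs ! i))\<^sup>2"
  have gap: "Re ((A *\<^sub>v y) \<bullet>c y) - t * Re (y \<bullet>c y) = (\<Sum>i\<in>{0..<n}. ?w i)"
    unfolding rayleigh_expansion(1,2)[OF A eb y]
    by (simp add: sum_subtractf sum_distrib_left left_diff_distrib)
  have nonneg: "\<And>i. i \<in> {0..<n} \<Longrightarrow> 0 \<le> ?w i" using t by fastforce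
  thus "t * Re (y \<bullet>c y) \<le> Re ((A *\<^sub>v y) \<bullet>c y)" using gap sum_nonneg[of "{0..<n}" ?w] by simp
  assume "t * Re (y \<bullet>c y) = Re ((A *\<^sub>v y) \<bullet>c y)"
  hence "\<forall>i\<in>{0..<n}. ?w i = 0" using gap nonneg sum_nonneg_eq_0_iff[of "{0..<n}" ?w] by simp
  thus "A *\<^sub>v y = complex_of_real t \<cdot>\<^sub>v y" by (intro rayleigh_expansion(3)[OF A eb y]) auto
qed

lemma rayleigh_upper:
  assumes A: "A \<in> carrier_mat n n" and eb: "eigenbasis n A vs d" and y: "y \<in> carrier_vec n"
    and t: "\<forall>i<n. y \<bullet>c vs ! i \<noteq> 0 \<longrightarrow> d i \<le> t"
  shows "Re ((A *\<^sub>v y) \<bullet>c y) \<le> t * Re (y \<bullet>c y)"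
    and "t * Re (y \<bullet>c y) = Re ((A *\<^sub>v y) \<bullet>c y) \<Longrightarrow> A *\<^sub>v y = complex_of_real t \<cdot>\<^sub>v y"
proof -
  let ?w = "\<lambda>i. (t - d i) * (cmod (y \<bullet>c vs ! i))\<^sup>2"
  have gap: "t * Re (y \<bullet>c y) - Re ((A *\<^sub>v y) \<bullet>c y) = (\<Sum>i\<in>{0..<n}. ?w i)"
    unfolding rayleigh_expansion(1,2)[OF A eb y]
    by (simp add: sum_subtractf sum_distrib_left left_diff_distrib)
  have nonneg: "\<And>i. i \<in> {0..<n} \<Longrightarrow> 0 \<le> ?w i" using t by fastforce
  thus "Re ((A *\<^sub>v y) \<bullet>c y) \<le> t * Re (y \<bullet>c y)" using gap sum_nonneg[of "{0..<n}" ?w] by simp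
  assume "t * Re (y \<bullet>c y) = Re ((A *\<^sub>v y) \<bullet>c y)"
  hence "\<forall>i\<in>{0..<n}. ?w i = 0" using gap nonneg sum_nonneg_eq_0_iff[of "{0..<n}" ?w] by simp
  thus "A *\<^sub>v y = complex_of_real t \<cdot>\<^sub>v y" by (intro rayleigh_expansion(3)[OF A eb y]) auto
qed

lemma eigvals_desc_eigenbasis:
  assumes A: "A \<in> carrier_mat n n" and eb: "eigenbasis n A vs d"
  shows "mset (eigvals_desc A) = mset (map d [0..<n])" and "length (eigvals_desc A) = n"
    and "sorted (rev (eigvals_desc A))"
proof -
  have e: "eigvals_desc A = rev (sorted_list_of_multiset (mset (map d [0..<n])))"
    unfolding eigvals_desc_def eigenbasis_eigenvalues[OF A eb] ..
  show m: "mset (eigvals_desc A) = mset (map d [0..<n])" unfolding e by simp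
  show "length (eigvals_desc A) = n" using arg_cong[OF m, of size] by simp
  show "sorted (rev (eigvals_desc A))" unfolding e by simp
qed

lemma card_eigvals:
  assumes A: "A \<in> carrier_mat n n" and eb: "eigenbasis n A vs d"
  shows "card {i. i < n \<and> P (d i)} = card {j. j < n \<and> P (eigvals_desc A ! j)}"
proof -
  note ev = eigvals_desc_eigenbasis[OF A eb]
  have "card {i. i < n \<and> P (d i)} = length (filter P (map d [0..<n]))"
    unfolding length_filter_conv_card by (intro arg_cong[where f = card]) auto
  also have "\<dots> = size (filter_mset P (mset (eigvals_desc A)))"
    unfolding ev(1) by (metis mset_filter size_mset)
  also have "\<dots> = length (filter P (eigvals_desc A))" by (metis mset_filter size_mset)
  also have "\<dots> = card {j. j < n \<and> P (eigvals_desc A ! j)}" by (simp add: length_filter_conv_card ev(2))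
  finally show ?thesis .
qed

lemma eig_eigvals_desc: "eig A (Suc p) = eigvals_desc A ! p"
  unfolding eig_def by simp

lemma eig_last_le:
  assumes A: "A \<in> carrier_mat n n" and eb: "eigenbasis n A vs d" and i: "i < n"
  shows "eig A n \<le> d i"
proof -
  note ev = eigvals_desc_eigenbasis[OF A eb]
  have "d i \<in> set (eigvals_desc A)" using mset_eq_setD[OF ev(1)] i by auto
  then obtain j where j: "j < n" "eigvals_desc A ! j = d i" using ev(2) by (auto simp: in_set_conv_nth)
  have "eigvals_desc A ! (n - 1) \<le> eigvals_desc A ! j"
    using sorted_rev_nth_mono[OF ev(3), of j "n - 1"] j ev(2) by auto
  thus ?thesis using j unfolding eig_def by simp
qed

lemma card_below_eig:
  assumes A: "A \<in> carrier_mat n n" and eb: "eigenbasis n A vs d" and p: "p < n"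
  shows "card {i. i < n \<and> d i < eig A (Suc p)} \<le> n - Suc p"
proof -
  note ev = eigvals_desc_eigenbasis[OF A eb]
  have "{j. j < n \<and> eigvals_desc A ! j < eigvals_desc A ! p} \<subseteq> {Suc p..<n}"
  proof
    fix j assume "j \<in> {j. j < n \<and> eigvals_desc A ! j < eigvals_desc A ! p}"
    hence j: "j < n" "eigvals_desc A ! j < eigvals_desc A ! p" by auto
    have "\<not> j \<le> p"
    proof
      assume "j \<le> p"
      hence "eigvals_desc A ! p \<le> eigvals_desc A ! j"
        using sorted_rev_nth_mono[OF ev(3), of j p] p ev(2) by simp
      with j show False by simp
    qed
    with j show "j \<in> {Suc p..<n}" by simp
  qed
  hence "card {j. j < n \<and> eigvals_desc A ! j < eigvals_desc A ! p} \<le> n - Suc p"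
    using card_mono[of "{Suc p..<n}"] by fastforce
  thus ?thesis using card_eigvals[OF A eb, of "\<lambda>x. x < eigvals_desc A ! p"]
    by (simp add: eig_eigvals_desc)
qed

text \<open>The eigenvalues strictly above \<lambda>_(p+1) and the indices
  l \<in> {1..<p} with \<lambda>_(l+1) = \<lambda>_(p+1) occupy disjoint parts of the
  first p positions of the sorted list.\<close>
lemma card_above_eig:
  assumes A: "A \<in> carrier_mat n n" and eb: "eigenbasis n A vs d" and p: "p < n"
  shows "card {i. i < n \<and> eig A (Suc p) < d i} + card {l\<in>{1..<p}. eig A (Suc l) = eig A (Suc p)} \<le> p"
proof -
  note ev = eigvals_desc_eigenbasis[OF A eb]
  define S1 where "S1 = {j. j < n \<and> eigvals_desc A ! p < eigvals_desc A ! j}"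
  define S2 where "S2 = {l\<in>{1..<p}. eigvals_desc A ! l = eigvals_desc A ! p}"
  have S1: "S1 \<subseteq> {0..<p}"
  proof
    fix j assume "j \<in> S1"
    hence j: "j < n" "eigvals_desc A ! p < eigvals_desc A ! j" unfolding S1_def by auto
    have "\<not> p \<le> j"
    proof
      assume "p \<le> j"
      hence "eigvals_desc A ! j \<le> eigvals_desc A ! p"
        using sorted_rev_nth_mono[OF ev(3), of p j] j ev(2) by simp
      with j show False by simp
    qed
    thus "j \<in> {0..<p}" by simp
  qed
  have S2: "S2 \<subseteq> {0..<p}" unfolding S2_def by auto
  have "S1 \<inter> S2 = {}" unfolding S1_def S2_def by auto
  hence "card S1 + card S2 = card (S1 \<union> S2)"
    using card_Un_disjoint[of S1 S2] finite_subset[OF S1 finite_atLeastLessThan]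
      finite_subset[OF S2 finite_atLeastLessThan] by simp
  also have "\<dots> \<le> p" using card_mono[of "{0..<p}" "S1 \<union> S2"] S1 S2 by auto
  finally show ?thesis using card_eigvals[OF A eb, of "\<lambda>x. eigvals_desc A ! p < x"]
    unfolding S1_def S2_def by (simp add: eig_eigvals_desc)
qed

lemma orthogonal_to_few_vectors:
  assumes S: "finite S" "S \<subseteq> carrier_vec n" "card S < n"
  shows "\<exists>y. y \<in> carrier_vec n \<and> y \<noteq> 0\<^sub>v n \<and> (\<forall>w\<in>S. y \<bullet>c w = (0::complex))"
proof -
  obtain rs where rs: "set rs = S" "distinct rs" using finite_distinct_list[OF S(1)] by blast
  have len: "length rs < n" using S(3) distinct_card[OF rs(2)] rs(1) by simp
  define cs where "cs = map conjugate rs"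
  have csc: "set cs \<subseteq> carrier_vec n" unfolding cs_def using rs(1) S(2) by auto
  define c where "c = (\<lambda>i. if i < length cs then cs ! i else 0\<^sub>v n)"
  define G where "G = mat\<^sub>r n n (\<lambda>i. if i = n - 1 then 0\<^sub>v n else c i)"
  have c: "c \<in> {0..<n} \<rightarrow> carrier_vec n" unfolding c_def using csc nth_mem by fastforce
  have G: "G \<in> carrier_mat n n" unfolding G_def by simp
  have "det G = 0" unfolding G_def by (rule det_row_0[OF _ c], insert len, auto)
  then obtain y where y: "y \<in> carrier_vec n" "y \<noteq> 0\<^sub>v n" "G *\<^sub>v y = 0\<^sub>v n"
    using det_0_iff_vec_prod_zero[OF G] by auto
  have "y \<bullet>c w = 0" if "w \<in> S" for w
  proof -
    obtain i where i: "i < length rs" and w: "w = rs ! i"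
      using \<open>w \<in> S\<close> rs(1) by (auto simp: in_set_conv_nth)
    have wc: "w \<in> carrier_vec n" using S(2) \<open>w \<in> S\<close> by auto
    have ci: "cs ! i \<in> carrier_vec n" using csc i unfolding cs_def by auto
    have "row G i = cs ! i" unfolding G_def using i len ci c_def cs_def by (subst row_mat_of_row_fun, auto)
    hence "(G *\<^sub>v y) $ i = conjugate w \<bullet> y" using G i len w unfolding cs_def by simp
    also have "\<dots> = y \<bullet>c w" by (rule conjugate_vec_sprod_comm[OF y(1) wc, symmetric])
    finally show ?thesis using y(3) i len by simp
  qed
  with y show ?thesis by blast
qed

text \<open>The equality case: if y lies in the span of the eigenvectors of A with
  eigenvalue at least a and in that of the eigenvectors of A + B with eigenvalue
  at most c, b bounds the spectrum of B from below and a + b = c,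
  then all three Rayleigh inequalities are equalities, so y is a common eigenvector.\<close>
lemma joint_eigenvector:
  assumes A: "A \<in> carrier_mat n n" and B: "B \<in> carrier_mat n n" and y: "y \<in> carrier_vec n"
    and ebA: "eigenbasis n A vA dA" and ebB: "eigenbasis n B vB dB"
    and ebC: "eigenbasis n (A + B) vC dC"
    and a: "\<forall>i<n. y \<bullet>c vA ! i \<noteq> 0 \<longrightarrow> a \<le> dA i"
    and b: "\<forall>i<n. b \<le> dB i"
    and c: "\<forall>i<n. y \<bullet>c vC ! i \<noteq> 0 \<longrightarrow> dC i \<le> c"
    and abc: "a + b = c"
  shows "A *\<^sub>v y = complex_of_real a \<cdot>\<^sub>v y" and "B *\<^sub>v y = complex_of_real b \<cdot>\<^sub>v y"
    and "(A + B) *\<^sub>v y = complex_of_real c \<cdot>\<^sub>v y"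
proof -
  have C: "A + B \<in> carrier_mat n n" using A B by simp
  note lA = rayleigh_lower[OF A ebA y a]
  note lB = rayleigh_lower[OF B ebB y] and uC = rayleigh_upper[OF C ebC y c]
  have lB': "b * Re (y \<bullet>c y) \<le> Re ((B *\<^sub>v y) \<bullet>c y)" using lB(1) b by blast
  have "(A + B) *\<^sub>v y = A *\<^sub>v y + B *\<^sub>v y" by (rule add_mult_distrib_mat_vec[OF A B y])
  hence sum: "Re (((A + B) *\<^sub>v y) \<bullet>c y) = Re ((A *\<^sub>v y) \<bullet>c y) + Re ((B *\<^sub>v y) \<bullet>c y)"
    using add_scalar_prod_distrib[of "A *\<^sub>v y" n "B *\<^sub>v y" "conjugate y"] A B y by simp
  have split: "c * Re (y \<bullet>c y) = a * Re (y \<bullet>c y) + b * Re (y \<bullet>c y)"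
    unfolding abc[symmetric] by (simp add: algebra_simps)
  have "a * Re (y \<bullet>c y) = Re ((A *\<^sub>v y) \<bullet>c y)" "b * Re (y \<bullet>c y) = Re ((B *\<^sub>v y) \<bullet>c y)"
    "c * Re (y \<bullet>c y) = Re (((A + B) *\<^sub>v y) \<bullet>c y)"
    using lA(1) lB' uC(1) sum split by linarith+
  with lA(2) lB(2) uC(2) b show "A *\<^sub>v y = complex_of_real a \<cdot>\<^sub>v y" "B *\<^sub>v y = complex_of_real b \<cdot>\<^sub>v y"
    "(A + B) *\<^sub>v y = complex_of_real c \<cdot>\<^sub>v y" by auto
qed

text \<open>It is found orthogonal to the eigenvectors of A below
  \<lambda>_(p+1)(A), those of A + B above \<lambda>_(p+1)(A + B) and those
  x l sharing the eigenvalue \<lambda>_(p+1)(A + B) -- fewer than n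
  vectors; orthogonality to the remaining x l is automatic.\<close>
lemma next_joint_eigenvector:
  fixes A B :: "complex mat"
  assumes hA: "hermitian_mat n A" and hB: "hermitian_mat n B" and p: "p < n"
    and x: "\<And>l. l \<in> {1..<p} \<Longrightarrow>
      x l \<in> carrier_vec n \<and> (A + B) *\<^sub>v x l = complex_of_real (eig (A + B) (Suc l)) \<cdot>\<^sub>v x l"
    and eq: "eig A (Suc p) + eig B n = eig (A + B) (Suc p)"
  shows "\<exists>y. y \<in> carrier_vec n \<and> y \<noteq> 0\<^sub>v n \<and>
     A *\<^sub>v y = complex_of_real (eig A (Suc p)) \<cdot>\<^sub>v y \<and>
     B *\<^sub>v y = complex_of_real (eig B n) \<cdot>\<^sub>v y \<and>
     (A + B) *\<^sub>v y = complex_of_real (eig (A + B) (Suc p)) \<cdot>\<^sub>v y \<and>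
     (\<forall>l\<in>{1..<p}. y \<bullet>c x l = 0)"
proof -
  define C where "C = A + B"
  define a where "a = eig A (Suc p)"
  define c where "c = eig C (Suc p)"
  have hC: "hermitian_mat n C" unfolding C_def by (rule hermitian_add[OF hA hB])
  have A: "A \<in> carrier_mat n n" and B: "B \<in> carrier_mat n n" and C: "C \<in> carrier_mat n n"
    using hA hB hC unfolding hermitian_mat_def by blast+
  obtain vA dA where ebA: "eigenbasis n A vA dA" using hermitian_eigenbasis[OF hA] by blast
  obtain vB dB where ebB: "eigenbasis n B vB dB" using hermitian_eigenbasis[OF hB] by blast
  obtain vC dC where ebC: "eigenbasis n C vC dC" using hermitian_eigenbasis[OF hC] by blast
  have vAi: "\<And>i. i < n \<Longrightarrow> vA ! i \<in> carrier_vec n" and vCi: "\<And>i. i < n \<Longrightarrow> vC ! i \<in> carrier_vec n"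
    using ebA ebC unfolding eigenbasis_def orthonormal_def by auto
  define S where "S = (\<lambda>i. vA ! i) ` {i. i < n \<and> dA i < a} \<union> (\<lambda>j. vC ! j) ` {j. j < n \<and> c < dC j}
    \<union> x ` {l\<in>{1..<p}. eig C (Suc l) = c}"
  have "card S \<le> card {i. i < n \<and> dA i < a} + card {j. j < n \<and> c < dC j}
      + card {l\<in>{1..<p}. eig C (Suc l) = c}"
    unfolding S_def by (intro card_Un_le[THEN order_trans] add_mono card_image_le) auto
  also have "\<dots> < n"
    using card_below_eig[OF A ebA p] card_above_eig[OF C ebC p] p unfolding a_def c_def by linarith
  finally have "card S < n" .
  moreover have "finite S" unfolding S_def by auto
  moreover have "S \<subseteq> carrier_vec n" unfolding S_def using vAi vCi x by auto
  ultimately obtain y where y: "y \<in> carrier_vec n" "y \<noteq> 0\<^sub>v n" and yS: "\<forall>w\<in>S. y \<bullet>c w = 0"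
    using orthogonal_to_few_vectors by blast
  have "\<forall>i<n. y \<bullet>c vA ! i \<noteq> 0 \<longrightarrow> a \<le> dA i" using yS unfolding S_def by force
  moreover have "\<forall>j<n. y \<bullet>c vC ! j \<noteq> 0 \<longrightarrow> dC j \<le> c" using yS unfolding S_def by force
  moreover have "\<forall>i<n. eig B n \<le> dB i" using eig_last_le[OF B ebB] by blast
  moreover have "a + eig B n = c" using eq unfolding a_def c_def C_def .
  ultimately have yA: "A *\<^sub>v y = complex_of_real a \<cdot>\<^sub>v y" and yB: "B *\<^sub>v y = complex_of_real (eig B n) \<cdot>\<^sub>v y"
    and yC: "C *\<^sub>v y = complex_of_real c \<cdot>\<^sub>v y"
    using joint_eigenvector[OF A B y(1) ebA ebB ebC[unfolded C_def]] unfolding C_def by blast+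
  have "y \<bullet>c x l = 0" if l: "l \<in> {1..<p}" for l
  proof (cases "eig C (Suc l) = c")
    case True
    thus ?thesis using yS l unfolding S_def by blast
  next
    case False
    with x[OF l] show ?thesis unfolding C_def[symmetric]
      by (intro hermitian_eigenvectors_orthogonal[OF hC y(1) _ yC]) auto
  qed
  with y yA yB yC show ?thesis unfolding a_def c_def C_def by blast
qed

definition joint_eigenvectors :: "nat \<Rightarrow> complex mat \<Rightarrow> complex mat \<Rightarrow> nat \<Rightarrow> (nat \<Rightarrow> complex vec) \<Rightarrow> bool"
  where "joint_eigenvectors n A B m x \<longleftrightarrow>
    (\<forall>i\<in>{1..m}. x i \<in> carrier_vec n \<and> x i \<noteq> 0\<^sub>v n \<and>
       A *\<^sub>v x i = complex_of_real (eig A (Suc i)) \<cdot>\<^sub>v x i \<and>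
       B *\<^sub>v x i = complex_of_real (eig B n) \<cdot>\<^sub>v x i \<and>
       (A + B) *\<^sub>v x i = complex_of_real (eig (A + B) (Suc i)) \<cdot>\<^sub>v x i) \<and>
    (\<forall>i\<in>{1..m}. \<forall>j\<in>{1..m}. i \<noteq> j \<longrightarrow> x i \<bullet>c x j = 0)"

lemma joint_eigenvectors_exist:
  assumes hA: "hermitian_mat n A" and hB: "hermitian_mat n B"
  shows "m < n \<Longrightarrow> \<forall>s\<in>{2..Suc m}. eig A s + eig B n = eig (A + B) s \<Longrightarrow>
    \<exists>x. joint_eigenvectors n A B m x"
proof (induction m)
  case 0
  show ?case by (auto simp: joint_eigenvectors_def)
next
  case (Suc m)
  then obtain x where x: "joint_eigenvectors n A B m x" by auto
  have "\<And>l. l \<in> {1..<Suc m} \<Longrightarrow>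
      x l \<in> carrier_vec n \<and> (A + B) *\<^sub>v x l = complex_of_real (eig (A + B) (Suc l)) \<cdot>\<^sub>v x l"
    using x unfolding joint_eigenvectors_def by auto
  from next_joint_eigenvector[OF hA hB Suc.prems(1) this] Suc.prems(2)
  obtain y where y: "y \<in> carrier_vec n" "y \<noteq> 0\<^sub>v n"
    "A *\<^sub>v y = complex_of_real (eig A (Suc (Suc m))) \<cdot>\<^sub>v y"
    "B *\<^sub>v y = complex_of_real (eig B n) \<cdot>\<^sub>v y"
    "(A + B) *\<^sub>v y = complex_of_real (eig (A + B) (Suc (Suc m))) \<cdot>\<^sub>v y"
    and orth: "\<And>l. l \<in> {1..m} \<Longrightarrow> y \<bullet>c x l = 0" by auto
  have orth': "x l \<bullet>c y = 0" if "l \<in> {1..m}" for l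
    using cscalar_prod_cnj[OF y(1), of "x l"] orth[OF that] x that
    unfolding joint_eigenvectors_def by auto
  have "joint_eigenvectors n A B (Suc m) (x(Suc m := y))"
    using x y orth orth' unfolding joint_eigenvectors_def
    by (auto simp: le_Suc_eq)
  thus ?case by blast
qed

theorem proposition1:
  fixes n k :: nat and A B :: "complex mat"
  assumes "2 \<le> k" and "k < n"
    and "hermitian_mat n A" and "hermitian_mat n B"
    and "\<forall>s\<in>{2..k}. eig A s + eig B n = eig (A + B) s"
  shows "\<exists>x :: nat \<Rightarrow> complex vec.
           (\<forall>i\<in>{1..k-1}. x i \<in> carrier_vec n \<and> x i \<noteq> 0\<^sub>v n) \<and>
           (\<forall>i\<in>{1..k-1}. \<forall>j\<in>{1..k-1}. i \<noteq> j \<longrightarrow> x i \<bullet>c x j = 0) \<and>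
           (\<forall>s\<in>{2..k}.
              A *\<^sub>v x (s - 1) = complex_of_real (eig A s) \<cdot>\<^sub>v x (s - 1) \<and>
              B *\<^sub>v x (s - 1) = complex_of_real (eig B n) \<cdot>\<^sub>v x (s - 1) \<and>
              (A + B) *\<^sub>v x (s - 1) = complex_of_real (eig (A + B) s) \<cdot>\<^sub>v x (s - 1))"
proof -
  have "k - 1 < n" and "\<forall>s\<in>{2..Suc (k - 1)}. eig A s + eig B n = eig (A + B) s"
    using assms(1,2,5) by auto
  then obtain x where x: "joint_eigenvectors n A B (k - 1) x"
    using joint_eigenvectors_exist[OF assms(3,4)] by blast
  have "s - 1 \<in> {1..k-1}" and "Suc (s - 1) = s" if "s \<in> {2..k}" for s using that by auto
  with x show ?thesis unfolding joint_eigenvectors_def by metis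
qed

end
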